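(* Let $V$ be a real vector space endowed with some topology and $X$ a convex cone in $V$. Suppose $w\in\mathbb{R}$, $f\in P_X$, and $R$ is a locally nonsatiated total relation on $X$. If $C\subseteq X$ is a cone in $V$ and $R$ is $C$-antichain-convex, then $\mathcal{M}(R,B^w_{f,X})$ is a convex $C$-antichain included in $\operatorname{bd}(F^w_f)$.
   Context: A cone in $V$ is a subset $K$ with $\lambda K\subseteq K$ for all $\lambda>0$ (possibly empty, need not contain $0$). $V^*$ denotes the continuous linear functionals on $V$; $P_X=\{f\in V^*: f(x)>0\text{ for all }x\in X\setminus\{0\}\}$; $F^w_f=\{v\in V:f(v)\le w\}$, $B^w_{f,X}=F^w_f\cap X$; $\operatorname{bd}$ is the topological boundary. A set $A$ is $C$-antichain-convex iff for all $x,y\in A$, $\lambda\in[0,1]$ with $y-x\notin C\cup(-C)$, $\lambda x+(1-\lambda)y\in A$; $A$ is a $C$-antichain iff for all distinct $x,y\in A$, $y-x\notin C\cup(-C)$. For a relation $R\subseteq X\times X$, $R(x)=\{t\in X:(t,x)\in R\}$; $R$ is total iff for all $s,t$, $t\in R(s)$ or $s\in R(t)$; $R$ is $C$-antichain-convex iff each $R(x)$ is $C$-antichain-convex; $R$ is locally nonsatiated iff $x\in\operatorname{cl}(\{y\in X:y\in R(x),\ x\notin R(y)\})$ for all $x\in X$. For $S\subseteq X$, $m\in S$ is $R$-maximal on $S$ iff for every $s\in S$ with $s\in R(m)$, $m\in R(s)$; $\mathcal{M}(R,S)$ is the set of these. *)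

theory Defs
  imports "HOL-Analysis.Analysis"
begin

text \<open>Cone in the paper's sense: closed under multiplication by positive scalars
  (possibly empty, need not contain 0).\<close>
definition pcone :: "'a::real_vector set \<Rightarrow> bool" where
  "pcone K \<longleftrightarrow> (\<forall>c::real. c > 0 \<longrightarrow> (\<forall>x\<in>K. c *\<^sub>R x \<in> K))"

definition posfun :: "'a::{real_vector,topological_space} set \<Rightarrow> ('a \<Rightarrow> real) set" where
  "posfun X = {f. linear f \<and> continuous_on UNIV f \<and> (\<forall>x\<in>X - {0}. f x > 0)}"

definition Fset :: "real \<Rightarrow> ('a \<Rightarrow> real) \<Rightarrow> 'a set" where
  "Fset w f = {v. f v \<le> w}"

definition Bset :: "real \<Rightarrow> ('a \<Rightarrow> real) \<Rightarrow> 'a set \<Rightarrow> 'a set" where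
  "Bset w f X = Fset w f \<inter> X"

definition antichain_convex :: "'a::real_vector set \<Rightarrow> 'a set \<Rightarrow> bool" where
  "antichain_convex C A \<longleftrightarrow> (\<forall>x\<in>A. \<forall>y\<in>A. \<forall>c::real. 0 \<le> c \<and> c \<le> 1 \<and>
      y - x \<notin> C \<union> uminus ` C \<longrightarrow> c *\<^sub>R x + (1 - c) *\<^sub>R y \<in> A)"

definition antichain :: "'a::real_vector set \<Rightarrow> 'a set \<Rightarrow> bool" where
  "antichain C A \<longleftrightarrow> (\<forall>x\<in>A. \<forall>y\<in>A. x \<noteq> y \<longrightarrow> y - x \<notin> C \<union> uminus ` C)"

definition rel_at :: "'a set \<Rightarrow> ('a \<times> 'a) set \<Rightarrow> 'a \<Rightarrow> 'a set" where
  "rel_at X R x = {t\<in>X. (t, x) \<in> R}"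

definition rel_total :: "'a set \<Rightarrow> ('a \<times> 'a) set \<Rightarrow> bool" where
  "rel_total X R \<longleftrightarrow> (\<forall>s\<in>X. \<forall>t\<in>X. t \<in> rel_at X R s \<or> s \<in> rel_at X R t)"

definition rel_antichain_convex :: "'a::real_vector set \<Rightarrow> 'a set \<Rightarrow> ('a \<times> 'a) set \<Rightarrow> bool" where
  "rel_antichain_convex C X R \<longleftrightarrow> (\<forall>x\<in>X. antichain_convex C (rel_at X R x))"

definition locally_nonsatiated :: "'a::topological_space set \<Rightarrow> ('a \<times> 'a) set \<Rightarrow> bool" where
  "locally_nonsatiated X R \<longleftrightarrow>
     (\<forall>x\<in>X. x \<in> closure {y\<in>X. y \<in> rel_at X R x \<and> x \<notin> rel_at X R y})"

definition maximal_set :: "'a set \<Rightarrow> ('a \<times> 'a) set \<Rightarrow> 'a set \<Rightarrow> 'a set" where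
  "maximal_set X R S = {m\<in>S. \<forall>s\<in>S. s \<in> rel_at X R m \<longrightarrow> m \<in> rel_at X R s}"

end

theory Submission
  imports Defs
begin

text \<open>Local nonsatiation pushes every maximal point of the budget set onto the hyperplane
  \<open>f = w\<close>, so the maximal points form a subset of that hyperplane. On the hyperplane no two
  distinct points are comparable, because \<open>f\<close> is strictly positive on \<open>C\<close>. For two maximal
  points \<open>x\<close>, \<open>y\<close> and any budget point \<open>s\<close>, totality puts \<open>x\<close> and \<open>y\<close> in \<open>R(s)\<close>; being
  incomparable, their whole segment lies in \<open>R(s)\<close> by antichain-convexity, and it stays in the
  budget set, so it consists of maximal points.\<close>

lemma maximal_set_subset: "maximal_set X R S \<subseteq> S"
  unfolding maximal_set_def by blast

lemma maximal_set_in_rel_at: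
  assumes "rel_total X R" "S \<subseteq> X" "m \<in> maximal_set X R S" "s \<in> S"
  shows "m \<in> rel_at X R s"
  using assms unfolding rel_total_def maximal_set_def by blast

lemma maximal_set_not_in_interior:
  assumes "locally_nonsatiated X R" "m \<in> maximal_set X R (A \<inter> X)"
  shows "m \<notin> interior A"
proof
  assume m_int: "m \<in> interior A"
  let ?better = "{y\<in>X. y \<in> rel_at X R m \<and> m \<notin> rel_at X R y}"
  have "m \<in> X"
    using assms(2) maximal_set_subset[of X R "A \<inter> X"] by blast
  then have "m \<in> closure ?better"
    using assms(1) unfolding locally_nonsatiated_def by blast
  then have "interior A \<inter> ?better \<noteq> {}"
    using m_int open_Int_closure_eq_empty[OF open_interior, of A ?better] by blast
  then obtain y where "y \<in> interior A" "y \<in> ?better"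
    by blast
  then have "y \<in> A \<inter> X" "y \<in> rel_at X R m" "m \<notin> rel_at X R y"
    using interior_subset[of A] by blast+
  then show False
    using assms(2) unfolding maximal_set_def by blast
qed

lemma maximal_set_Bset_subset_frontier:
  assumes "locally_nonsatiated X R"
  shows "maximal_set X R (Bset w f X) \<subseteq> frontier (Fset w f)"
proof
  fix m assume m: "m \<in> maximal_set X R (Bset w f X)"
  then have "m \<in> Fset w f"
    using maximal_set_subset[of X R "Bset w f X"] unfolding Bset_def by blast
  then have "m \<in> closure (Fset w f)"
    by (rule closure_subset[THEN subsetD])
  moreover have "m \<notin> interior (Fset w f)"
    using maximal_set_not_in_interior[OF assms] m unfolding Bset_def .
  ultimately show "m \<in> frontier (Fset w f)"
    unfolding frontier_def by blast
qed

lemma frontier_Fset_subset_level_set: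
  assumes "continuous_on UNIV f"
  shows "frontier (Fset w f) \<subseteq> {v. f v = w}"
proof -
  have "closure (Fset w f) = Fset w f"
    unfolding Fset_def by (simp add: closed_Collect_le assms)
  moreover have "{v. f v < w} \<subseteq> interior (Fset w f)"
    by (rule interior_maximal) (auto simp: Fset_def intro: open_Collect_less assms)
  ultimately show ?thesis
    unfolding frontier_def Fset_def by force
qed

lemma antichain_subset: "antichain C B \<Longrightarrow> A \<subseteq> B \<Longrightarrow> antichain C A"
  unfolding antichain_def by blast

lemma antichain_level_set:
  fixes f :: "'a::real_vector \<Rightarrow> real"
  assumes "linear f" "\<forall>x\<in>X - {0}. 0 < f x" "C \<subseteq> X"
  shows "antichain C {v. f v = w}"
  unfolding antichain_def
proof (intro ballI impI)
  fix x y assume "x \<in> {v. f v = w}" "y \<in> {v. f v = w}" "x \<noteq> y"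
  then have "f (y - x) = 0" "f (x - y) = 0" "y - x \<noteq> 0" "x - y \<noteq> 0"
    using linear_diff[OF assms(1)] by auto
  moreover have "z \<notin> C" if "f z = 0" "z \<noteq> 0" for z
  proof
    assume "z \<in> C"
    then have "0 < f z"
      using that(2) assms(2,3) by blast
    then show False
      using that(1) by simp
  qed
  ultimately have "y - x \<notin> C" "x - y \<notin> C"
    by blast+
  moreover have "y - x \<in> uminus ` C \<longleftrightarrow> x - y \<in> C"
    by (simp add: equation_minus_iff image_iff)
  ultimately show "y - x \<notin> C \<union> uminus ` C"
    by blast
qed

lemma maximal_set_convex:
  assumes "rel_total X R" "rel_antichain_convex C X R"
    and "antichain C (maximal_set X R S)"
    and "maximal_set X R S \<subseteq> L" "convex L" "L \<subseteq> S" "S \<subseteq> X"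
  shows "convex (maximal_set X R S)"
proof (rule convexI)
  fix x y and u v :: real
  assume x: "x \<in> maximal_set X R S" and y: "y \<in> maximal_set X R S"
    and uv: "0 \<le> u" "0 \<le> v" "u + v = 1"
  let ?z = "u *\<^sub>R x + v *\<^sub>R y"
  have z_S: "?z \<in> S"
    using assms(4-6) x y uv unfolding convex_def by blast
  have "?z \<in> rel_at X R s" if s: "s \<in> S" for s
  proof (cases "x = y")
    case True
    then show ?thesis
      using maximal_set_in_rel_at[OF assms(1,7) x s] uv
      by (metis scaleR_add_left scaleR_one)
  next
    case False
    have "y - x \<notin> C \<union> uminus ` C"
      using assms(3) x y False unfolding antichain_def by blast
    moreover have "antichain_convex C (rel_at X R s)"
      using assms(2,7) s unfolding rel_antichain_convex_def by blast
    ultimately have "u *\<^sub>R x + (1 - u) *\<^sub>R y \<in> rel_at X R s"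
      using maximal_set_in_rel_at[OF assms(1,7) x s] maximal_set_in_rel_at[OF assms(1,7) y s] uv
      unfolding antichain_convex_def by auto
    moreover have "v = 1 - u"
      using uv(3) by simp
    ultimately show ?thesis
      by simp
  qed
  then show "?z \<in> maximal_set X R S"
    using z_S unfolding maximal_set_def by blast
qed

theorem theorem13:
  fixes X C :: "'a::{real_vector,topological_space} set"
    and R :: "('a \<times> 'a) set" and f :: "'a \<Rightarrow> real" and w :: real
  assumes "convex X" and "pcone X"
    and "f \<in> posfun X"
    and "R \<subseteq> X \<times> X"
    and "rel_total X R" and "locally_nonsatiated X R"
    and "C \<subseteq> X" and "pcone C"
    and "rel_antichain_convex C X R"
  shows "convex (maximal_set X R (Bset w f X))
    \<and> antichain C (maximal_set X R (Bset w f X))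
    \<and> maximal_set X R (Bset w f X) \<subseteq> frontier (Fset w f)"
proof -
  let ?M = "maximal_set X R (Bset w f X)" and ?L = "{v. f v = w} \<inter> X"
  have f: "linear f" "continuous_on UNIV f" "\<forall>x\<in>X - {0}. 0 < f x"
    using assms(3) unfolding posfun_def by auto
  have frontier: "?M \<subseteq> frontier (Fset w f)"
    by (rule maximal_set_Bset_subset_frontier[OF assms(6)])
  have M_level: "?M \<subseteq> {v. f v = w}"
    using frontier frontier_Fset_subset_level_set[OF f(2)] by (rule subset_trans)
  have antichain: "antichain C ?M"
    by (rule antichain_subset[OF antichain_level_set[OF f(1,3) assms(7)] M_level])
  have "?M \<subseteq> X"
    using maximal_set_subset[of X R "Bset w f X"] unfolding Bset_def by blast
  with M_level have M_L: "?M \<subseteq> ?L"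
    by (rule Int_greatest)
  have "?L = f -` {w} \<inter> X"
    by auto
  then have "convex ?L"
    using convex_Int[OF convex_linear_vimage[OF f(1) convex_singleton] assms(1)] by (rule ssubst)
  moreover have "?L \<subseteq> Bset w f X" "Bset w f X \<subseteq> X"
    by (auto simp: Bset_def Fset_def)
  ultimately have "convex ?M"
    by (rule maximal_set_convex[OF assms(5,9) antichain M_L])
  with antichain frontier show ?thesis
    by blast
qed

end
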